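(* Let $\sigma$ be a reasonable strategy of player $0$ in the escape arena $\mathcal{A}_\bot$ and $I_\sigma$ its set of improvements. Then every direct improvement $\sigma'$ of $\sigma$ satisfies $\sigma'\preceq I_\sigma$, i.e. $\mathcal{V}_{\sigma'}(s)\preceq\mathcal{V}_{I_\sigma}(s)$ for all vertices $s$.
   Context: Parity game arena: $\mathcal{A}=(V,E,o,c)$ with $V$ finite, $E\subseteq V\times V$, every vertex has a successor, owner map $o:V\to\{0,1\}$, colouring $c:V\to\{0,\dots,d-1\}$; $V_i=o^{-1}(i)$. An infinite vertex sequence is won by player $0$ (parity condition) iff the largest colour occurring infinitely often is even. A cycle $s_0\dots s_n$ ($s_{j+1}\in s_jE$, $s_0\in s_nE$) is $i$-dominated if its largest colour has parity $i$. Escape arena $\mathcal{A}_\bot$: vertices $V\cup\{\bot\}$, edges $E_\bot=E\cup(V_0\times\{\bot\})$, $\bot$ owned by player $0$ with no outgoing edges. Let $E_0=E_\bot\cap (V_0\times(V\cup\{\bot\}))$, $E_1=E\cap(V_1\times V)$. A strategy of player $i$ is a set $\sigma\subseteq E_i$ with $s\sigma\neq\emptyset$ for all $s\in V_i$. $\mathcal{A}_\bot|_{\sigma,\tau}$ is the graph with edge set $\sigma\cup\tau$, $\mathcal{A}_\bot|_\sigma$ the graph with edge set $\sigma\cup E_1$; a play is a maximal path (infinite or ending in $\bot$). Colour profiles: $\mathcal{P}=\mathbb{Z}^d\cup\{-\infty,\infty\}$, $\text{\o}$ the zero vector. $\wp(s)$ ($s\in V$) is the unit vector at coordinate $c(s)$;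 for a finite path $\wp$ is the sum over its vertices in $V$; for an infinite play $\wp=\infty$ if won by player $0$ under the parity condition, else $-\infty$. Addition componentwise, $x+\infty=\infty$, $x+(-\infty)=-\infty$. Total order $\prec$: $-\infty$ least, $\infty$ greatest; for distinct $p,p'\in\mathbb{Z}^d$ with $k$ the largest index where they differ, $p\prec p'$ iff ($k$ even and $p_k<p'_k$) or ($k$ odd and $p_k>p'_k$). Valuation of a player-$0$ strategy $\sigma$: $\mathcal{V}_\sigma(\bot)=\text{\o}$, and for $s\in V$, $\mathcal{V}_\sigma(s)=\min^{\prec}_{\tau}\max^{\prec}\{\wp(\pi)\mid\pi\text{ a play in }\mathcal{A}_\bot|_{\sigma,\tau}\text{ from }s\}$, min over player-$1$ strategies. $\sigma$ is reasonable if $\mathcal{A}_\bot|_\sigma$ has no $1$-dominated cycle. For strategies, $\sigma_a\preceq\sigma_b$ iff $\mathcal{V}_{\sigma_a}(s)\preceq\mathcal{V}_{\sigma_b}(s)$ for all $s$. For reasonable $\sigma$, $(s,t)\in E_0$ is an improvement if $\mathcal{V}_\sigma(s)\preceq\wp(s)+\mathcal{V}_\sigma(t)$; $I_\sigma$ is the set of all improvements. A direct improvement of $\sigma$ is a player-$0$ strategy $\sigma'\subseteq I_\sigma$. *)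

theory Defs
  imports Main
begin

text \<open>The escape arena uses the vertex type 'v option: Some v is the vertex v of V,
  None is the escape vertex bot.\<close>

definition arena :: "'v set \<Rightarrow> ('v \<times> 'v) set \<Rightarrow> 'v set \<Rightarrow> ('v \<Rightarrow> nat) \<Rightarrow> nat \<Rightarrow> bool" where
  "arena V E V0 c d \<longleftrightarrow> finite V \<and> E \<subseteq> V \<times> V \<and> (\<forall>v\<in>V. \<exists>w. (v, w) \<in> E)
     \<and> V0 \<subseteq> V \<and> (\<forall>v\<in>V. c v < d)"

definition Ebot :: "('v \<times> 'v) set \<Rightarrow> 'v set \<Rightarrow> ('v option \<times> 'v option) set" where
  "Ebot E V0 = {(Some u, Some v) | u v. (u, v) \<in> E} \<union> {(Some u, None) | u. u \<in> V0}"

definition E0 :: "('v \<times> 'v) set \<Rightarrow> 'v set \<Rightarrow> ('v option \<times> 'v option) set" where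
  "E0 E V0 = {(s, t) \<in> Ebot E V0. \<exists>u\<in>V0. s = Some u}"

definition E1 :: "'v set \<Rightarrow> ('v \<times> 'v) set \<Rightarrow> 'v set \<Rightarrow> ('v option \<times> 'v option) set" where
  "E1 V E V0 = {(Some u, Some v) | u v. (u, v) \<in> E \<and> u \<in> V - V0}"

definition strategy0 :: "('v \<times> 'v) set \<Rightarrow> 'v set \<Rightarrow> ('v option \<times> 'v option) set \<Rightarrow> bool" where
  "strategy0 E V0 \<sigma> \<longleftrightarrow> \<sigma> \<subseteq> E0 E V0 \<and> (\<forall>s\<in>V0. \<exists>t. (Some s, t) \<in> \<sigma>)"

definition strategy1 :: "'v set \<Rightarrow> ('v \<times> 'v) set \<Rightarrow> 'v set \<Rightarrow> ('v option \<times> 'v option) set \<Rightarrow> bool" where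
  "strategy1 V E V0 \<tau> \<longleftrightarrow> \<tau> \<subseteq> E1 V E V0 \<and> (\<forall>s\<in>V - V0. \<exists>t. (Some s, t) \<in> \<tau>)"

text \<open>Colour profiles: Z^d (as functions nat => int, only coordinates < d matter;
  all profiles arising are zero outside {0..<d}) together with -infinity and +infinity.\<close>
datatype prof = NInf | Fin "nat \<Rightarrow> int" | PInf

definition pzero :: prof where "pzero = Fin (\<lambda>_. 0)"

definition punit :: "nat \<Rightarrow> prof" where "punit k = Fin (\<lambda>i. if i = k then 1 else 0)"

fun padd :: "prof \<Rightarrow> prof \<Rightarrow> prof" where
  "padd (Fin a) (Fin b) = Fin (\<lambda>i. a i + b i)"
| "padd _ PInf = PInf"
| "padd _ NInf = NInf"
| "padd PInf _ = PInf"
| "padd NInf _ = NInf"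

fun prof_less :: "nat \<Rightarrow> prof \<Rightarrow> prof \<Rightarrow> bool" where
  "prof_less d NInf NInf = False"
| "prof_less d NInf _ = True"
| "prof_less d _ NInf = False"
| "prof_less d PInf _ = False"
| "prof_less d _ PInf = True"
| "prof_less d (Fin a) (Fin b) =
     (\<exists>k<d. (\<forall>i. k < i \<and> i < d \<longrightarrow> a i = b i) \<and>
            ((even k \<and> a k < b k) \<or> (odd k \<and> a k > b k)))"

definition prof_le :: "nat \<Rightarrow> prof \<Rightarrow> prof \<Rightarrow> bool" where
  "prof_le d p q \<longleftrightarrow> p = q \<or> prof_less d p q"

definition pmax :: "nat \<Rightarrow> prof set \<Rightarrow> prof" where
  "pmax d S = (THE x. x \<in> S \<and> (\<forall>y\<in>S. prof_le d y x))"

definition pmin :: "nat \<Rightarrow> prof set \<Rightarrow> prof" where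
  "pmin d S = (THE x. x \<in> S \<and> (\<forall>y\<in>S. prof_le d x y))"

definition path_prof :: "('v \<Rightarrow> nat) \<Rightarrow> 'v option list \<Rightarrow> prof" where
  "path_prof c xs = Fin (\<lambda>i. int (length (filter (\<lambda>x. x \<noteq> None \<and> c (the x) = i) xs)))"

definition inf_prof :: "('v \<Rightarrow> nat) \<Rightarrow> (nat \<Rightarrow> 'v option) \<Rightarrow> prof" where
  "inf_prof c \<pi> = (if even (Max {k. \<exists>\<^sub>\<infinity>n. c (the (\<pi> n)) = k}) then PInf else NInf)"

definition play_profs :: "('v \<Rightarrow> nat) \<Rightarrow> ('v option \<times> 'v option) set \<Rightarrow> 'v option \<Rightarrow> prof set" where
  "play_profs c F s =
     {path_prof c xs | xs. xs \<noteq> [] \<and> hd xs = s \<and>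
        (\<forall>i. Suc i < length xs \<longrightarrow> (xs ! i, xs ! Suc i) \<in> F) \<and> (\<nexists>t. (last xs, t) \<in> F)}
   \<union> {inf_prof c \<pi> | \<pi>. \<pi> 0 = s \<and> (\<forall>n. (\<pi> n, \<pi> (Suc n)) \<in> F)}"

definition val :: "'v set \<Rightarrow> ('v \<times> 'v) set \<Rightarrow> 'v set \<Rightarrow> ('v \<Rightarrow> nat) \<Rightarrow> nat \<Rightarrow>
    ('v option \<times> 'v option) set \<Rightarrow> 'v option \<Rightarrow> prof" where
  "val V E V0 c d \<sigma> s =
     (if s = None then pzero
      else pmin d {pmax d (play_profs c (\<sigma> \<union> \<tau>) s) | \<tau>. strategy1 V E V0 \<tau>})"

definition reasonable :: "'v set \<Rightarrow> ('v \<times> 'v) set \<Rightarrow> 'v set \<Rightarrow> ('v \<Rightarrow> nat) \<Rightarrow>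
    ('v option \<times> 'v option) set \<Rightarrow> bool" where
  "reasonable V E V0 c \<sigma> \<longleftrightarrow>
     \<not> (\<exists>xs. xs \<noteq> [] \<and>
          (\<forall>i<length xs. (xs ! i, xs ! ((Suc i) mod length xs)) \<in> \<sigma> \<union> E1 V E V0) \<and>
          odd (Max ((\<lambda>x. c (the x)) ` set xs)))"

definition improvements :: "'v set \<Rightarrow> ('v \<times> 'v) set \<Rightarrow> 'v set \<Rightarrow> ('v \<Rightarrow> nat) \<Rightarrow> nat \<Rightarrow>
    ('v option \<times> 'v option) set \<Rightarrow> ('v option \<times> 'v option) set" where
  "improvements V E V0 c d \<sigma> =
     {(s, t) \<in> E0 E V0. prof_le d (val V E V0 c d \<sigma> s)
                          (padd (punit (c (the s))) (val V E V0 c d \<sigma> t))}"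

end

theory Submission
  imports Defs "HOL-Library.Omega_Words_Fun"
begin

text \<open>Since \<open>\<sigma>' \<subseteq> I\<^sub>\<sigma>\<close>, for every counter-strategy \<open>\<tau>\<close> of player 1 each play of
  \<open>\<sigma>' \<union> \<tau>\<close> is a play of \<open>I\<^sub>\<sigma> \<union> \<tau>\<close>: the two graphs have the same dead end \<open>\<bottom>\<close>, as
  \<open>\<sigma>'\<close> already leaves every vertex of player 0. The maximum over a larger set of
  profiles is larger, and minimising over \<open>\<tau>\<close> preserves this.

  What needs work is that these maxima exist for the order \<open>\<prec>\<close>. From a vertex of a
  finite graph, either player 0 wins some infinite play (profile \<open>\<infinity>\<close>), or every cycle
  on a finite play is odd-dominated and cutting it out increases the profile; then the
  maximum is attained among the finitely many simple plays.\<close>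

section \<open>The order on colour profiles\<close>

definition prof_bounded :: "nat \<Rightarrow> prof \<Rightarrow> bool" where
  "prof_bounded d p \<longleftrightarrow> (\<forall>a. p = Fin a \<longrightarrow> (\<forall>i\<ge>d. a i = 0))"

lemma prof_less_irrefl: "\<not> prof_less d p p"
  by (cases p) auto

lemma prof_less_trans:
  assumes "prof_less d p q" "prof_less d q r"
  shows "prof_less d p r"
proof (cases p; cases q; cases r)
  fix a b e assume fin: "p = Fin a" "q = Fin b" "r = Fin e"
  from assms fin obtain k1 where k1: "k1 < d" "\<forall>i. k1 < i \<and> i < d \<longrightarrow> a i = b i"
    "(even k1 \<and> a k1 < b k1) \<or> (odd k1 \<and> a k1 > b k1)" by auto
  from assms fin obtain k2 where k2: "k2 < d" "\<forall>i. k2 < i \<and> i < d \<longrightarrow> b i = e i"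
    "(even k2 \<and> b k2 < e k2) \<or> (odd k2 \<and> b k2 > e k2)" by auto
  show ?thesis
  proof (cases "k1 \<le> k2")
    case True
    then show ?thesis using fin k1 k2 by (auto intro!: exI[of _ k2] simp: le_less)
  next
    case False
    then show ?thesis using fin k1 k2 by (auto intro!: exI[of _ k1])
  qed
qed (use assms in auto)

lemma prof_le_refl: "prof_le d p p"
  by (simp add: prof_le_def)

lemma prof_le_trans: "prof_le d p q \<Longrightarrow> prof_le d q r \<Longrightarrow> prof_le d p r"
  unfolding prof_le_def using prof_less_trans by blast

lemma prof_le_antisym: "prof_le d p q \<Longrightarrow> prof_le d q p \<Longrightarrow> p = q"
  unfolding prof_le_def using prof_less_trans prof_less_irrefl by blast

lemma prof_le_PInf: "prof_le d p PInf"
  by (cases p) (auto simp: prof_le_def)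

lemma NInf_prof_le: "prof_le d NInf p"
  by (cases p) (auto simp: prof_le_def)

lemma prof_le_total:
  assumes "prof_bounded d p" "prof_bounded d q"
  shows "prof_le d p q \<or> prof_le d q p"
proof (cases p; cases q)
  fix a b assume fin: "p = Fin a" "q = Fin b"
  show ?thesis
  proof (cases "\<exists>i<d. a i \<noteq> b i")
    case False
    with assms fin have "a = b" unfolding prof_bounded_def by (metis ext not_le)
    then show ?thesis using fin by (simp add: prof_le_def)
  next
    case True
    define k where "k = Max {i. i < d \<and> a i \<noteq> b i}"
    have "k < d" "a k \<noteq> b k"
      using True Max_in[of "{i. i < d \<and> a i \<noteq> b i}"] unfolding k_def by auto
    moreover have "\<forall>i. k < i \<and> i < d \<longrightarrow> a i = b i"
    proof (intro allI impI; rule ccontr)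
      fix i assume i: "k < i \<and> i < d" "a i \<noteq> b i"
      then have "i \<le> k" unfolding k_def by (intro Max_ge) auto
      then show False using i by simp
    qed
    ultimately have "prof_less d p q \<or> prof_less d q p"
      using fin by (cases "even k") (auto simp: linorder_neq_iff intro!: exI[of _ k])
    then show ?thesis by (auto simp: prof_le_def)
  qed
qed (auto simp: prof_le_def)

lemma finite_has_greatest_wrt:
  assumes "finite S" "S \<noteq> {}" "S \<subseteq> B"
    and trans: "\<And>x y z. R x y \<Longrightarrow> R y z \<Longrightarrow> R x z"
    and total: "\<And>x y. x \<in> B \<Longrightarrow> y \<in> B \<Longrightarrow> R x y \<or> R y x"
  shows "\<exists>m\<in>S. \<forall>y\<in>S. R y m"
  using assms(1-3)
proof (induction S rule: finite_ne_induct)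
  case (singleton x)
  then show ?case using total by blast
next
  case (insert x S)
  then obtain m where "m \<in> S" "\<forall>y\<in>S. R y m" by auto
  then show ?case using insert.prems trans total by (metis insert_iff subset_iff)
qed

definition is_max :: "nat \<Rightarrow> prof set \<Rightarrow> prof \<Rightarrow> bool" where
  "is_max d S x \<longleftrightarrow> x \<in> S \<and> (\<forall>y\<in>S. prof_le d y x)"

definition is_min :: "nat \<Rightarrow> prof set \<Rightarrow> prof \<Rightarrow> bool" where
  "is_min d S x \<longleftrightarrow> x \<in> S \<and> (\<forall>y\<in>S. prof_le d x y)"

lemma pmax_eq: "is_max d S x \<Longrightarrow> pmax d S = x"
  unfolding pmax_def is_max_def by (rule the_equality) (auto intro: prof_le_antisym)

lemma pmin_eq: "is_min d S x \<Longrightarrow> pmin d S = x"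
  unfolding pmin_def is_min_def by (rule the_equality) (auto intro: prof_le_antisym)

lemma is_max_pmax: "is_max d S x \<Longrightarrow> is_max d S (pmax d S)"
  using pmax_eq by simp

lemma finite_is_max_pmax:
  assumes "finite S" "S \<noteq> {}" "\<forall>p\<in>S. prof_bounded d p"
  shows "is_max d S (pmax d S)"
  using finite_has_greatest_wrt[OF assms(1,2), of "{p. prof_bounded d p}" "prof_le d"]
    assms(3) prof_le_trans prof_le_total is_max_pmax unfolding is_max_def by blast

lemma finite_is_min_pmin:
  assumes "finite S" "S \<noteq> {}" "\<forall>p\<in>S. prof_bounded d p"
  shows "is_min d S (pmin d S)"
  using finite_has_greatest_wrt[OF assms(1,2), of "{p. prof_bounded d p}" "\<lambda>p q. prof_le d q p"]
    assms(3) prof_le_trans prof_le_total pmin_eq unfolding is_min_def by blast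

lemma pmax_mono:
  "is_max d S (pmax d S) \<Longrightarrow> is_max d T (pmax d T) \<Longrightarrow> S \<subseteq> T \<Longrightarrow> prof_le d (pmax d S) (pmax d T)"
  unfolding is_max_def by blast

lemma pmin_image_mono:
  assumes "finite T" "T \<noteq> {}"
    and "\<And>\<tau>. \<tau> \<in> T \<Longrightarrow> prof_bounded d (f \<tau>)" "\<And>\<tau>. \<tau> \<in> T \<Longrightarrow> prof_bounded d (g \<tau>)"
    and le: "\<And>\<tau>. \<tau> \<in> T \<Longrightarrow> prof_le d (f \<tau>) (g \<tau>)"
  shows "prof_le d (pmin d (f ` T)) (pmin d (g ` T))"
proof -
  have "is_min d (f ` T) (pmin d (f ` T))" "is_min d (g ` T) (pmin d (g ` T))"
    using assms by (auto intro!: finite_is_min_pmin)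
  then obtain \<tau> where "\<tau> \<in> T" "pmin d (g ` T) = g \<tau>" "prof_le d (pmin d (f ` T)) (f \<tau>)"
    unfolding is_min_def by blast
  then show ?thesis using le prof_le_trans by metis
qed

section \<open>Plays\<close>

definition finite_play :: "('a \<times> 'a) set \<Rightarrow> 'a \<Rightarrow> 'a list \<Rightarrow> bool" where
  "finite_play F s xs \<longleftrightarrow>
     xs \<noteq> [] \<and> hd xs = s \<and> successively (\<lambda>x y. (x, y) \<in> F) xs \<and> last xs \<notin> Domain F"

definition infinite_play :: "('a \<times> 'a) set \<Rightarrow> 'a \<Rightarrow> (nat \<Rightarrow> 'a) \<Rightarrow> bool" where
  "infinite_play F s \<pi> \<longleftrightarrow> \<pi> 0 = s \<and> (\<forall>n. (\<pi> n, \<pi> (Suc n)) \<in> F)"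

definition colour_count :: "('v \<Rightarrow> nat) \<Rightarrow> 'v option list \<Rightarrow> nat \<Rightarrow> int" where
  "colour_count c xs i = int (length (filter (\<lambda>x. x \<noteq> None \<and> c (the x) = i) xs))"

lemma path_prof_colour_count: "path_prof c xs = Fin (colour_count c xs)"
  by (simp add: path_prof_def colour_count_def fun_eq_iff)

lemma play_profs_alt:
  "play_profs c F s =
     path_prof c ` {xs. finite_play F s xs} \<union> inf_prof c ` {\<pi>. infinite_play F s \<pi>}"
  unfolding play_profs_def finite_play_def infinite_play_def successively_conv_nth Domain_iff
  by auto

lemma play_profs_mono:
  assumes "F \<subseteq> G" "Domain G \<subseteq> Domain F"
  shows "play_profs c F s \<subseteq> play_profs c G s"
proof -
  have "finite_play G s xs" if "finite_play F s xs" for xs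
    using that assms successively_mono[of "\<lambda>x y. (x, y) \<in> F" xs "\<lambda>x y. (x, y) \<in> G"]
    unfolding finite_play_def by blast
  moreover have "infinite_play G s \<pi>" if "infinite_play F s \<pi>" for \<pi>
    using that assms unfolding infinite_play_def by blast
  ultimately show ?thesis unfolding play_profs_alt by blast
qed

lemma colour_count_append: "colour_count c (xs @ ys) i = colour_count c xs i + colour_count c ys i"
  by (simp add: colour_count_def)

lemma colour_count_eq_0:
  assumes "\<And>x. x \<in> set xs \<Longrightarrow> x \<noteq> None \<Longrightarrow> c (the x) \<noteq> i"
  shows "colour_count c xs i = 0"
  unfolding colour_count_def using assms by (subst filter_False) auto

lemma colour_count_pos:
  assumes "Some v \<in> set xs"
  shows "0 < colour_count c xs (c v)"
proof -
  have "Some v \<in> set (filter (\<lambda>x. x \<noteq> None \<and> c (the x) = c v) xs)"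
    using assms by simp
  from length_pos_if_in_set[OF this] show ?thesis unfolding colour_count_def by simp
qed

lemma path_prof_less_remove_cycle:
  fixes c :: "'v \<Rightarrow> nat" and cyc :: "'v option list"
  defines "M \<equiv> Max ((\<lambda>x. c (the x)) ` set cyc)"
  assumes "cyc \<noteq> []" and no_None: "None \<notin> set cyc" and "odd M" "M < d"
  shows "prof_less d (path_prof c (a @ cyc @ r)) (path_prof c (a @ r))"
proof -
  have "M \<in> (\<lambda>x. c (the x)) ` set cyc"
    unfolding M_def using assms(2) by (intro Max_in) auto
  then obtain v where v: "Some v \<in> set cyc" "c v = M"
    using no_None by (metis (no_types, lifting) image_iff option.exhaust_sel)
  have split: "colour_count c (a @ cyc @ r) i = colour_count c (a @ r) i + colour_count c cyc i" for i
    by (simp add: colour_count_append)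
  have "colour_count c cyc i = 0" if "M < i" for i
  proof (rule colour_count_eq_0)
    fix x assume "x \<in> set cyc"
    then have "c (the x) \<le> M" unfolding M_def by (intro Max_ge) auto
    then show "c (the x) \<noteq> i" using that by simp
  qed
  then show ?thesis
    using colour_count_pos[OF v(1), of c] v(2) split assms(4,5)
    by (auto simp: path_prof_colour_count intro!: exI[of _ M])
qed

lemma comp_iter: "xs \<noteq> [] \<Longrightarrow> f \<circ> xs\<^sup>\<omega> = (map f xs)\<^sup>\<omega>"
  by (rule ext) simp

lemma inf_prof_lasso:
  assumes "cyc \<noteq> []"
  shows "inf_prof c (a \<frown> cyc\<^sup>\<omega>) =
           (if even (Max ((\<lambda>x. c (the x)) ` set cyc)) then PInf else NInf)"
proof -
  have "{k. \<exists>\<^sub>\<infinity>n. c (the ((a \<frown> cyc\<^sup>\<omega>) n)) = k} =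
          limit (map (\<lambda>x. c (the x)) a \<frown> ((\<lambda>x. c (the x)) \<circ> cyc\<^sup>\<omega>))"
    unfolding limit_def by (simp add: conc_def)
  also have "\<dots> = (\<lambda>x. c (the x)) ` set cyc"
    using assms by (simp add: comp_iter)
  finally show ?thesis by (simp add: inf_prof_def)
qed

lemma iter_edge:
  assumes "cyc \<noteq> []" "successively P (cyc @ [hd cyc])"
  shows "P (cyc\<^sup>\<omega> n) (cyc\<^sup>\<omega> (Suc n))"
proof -
  let ?L = "length cyc" and ?i = "n mod length cyc"
  have i: "?i < ?L" using assms(1) by simp
  have edge: "P ((cyc @ [hd cyc]) ! ?i) ((cyc @ [hd cyc]) ! Suc ?i)"
    using successively_nth[OF assms(2)] i by simp
  show ?thesis
  proof (cases "Suc ?i < ?L")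
    case True
    then have "Suc n mod ?L = Suc ?i" by (metis mod_Suc not_less_iff_gr_or_eq)
    then show ?thesis using edge True i assms(1) by (simp add: nth_append)
  next
    case False
    then have "Suc ?i = ?L" using i by simp
    then have "Suc n mod ?L = 0" by (metis mod_Suc nat.simps(3))
    then show ?thesis using edge \<open>Suc ?i = ?L\<close> i assms(1) by (simp add: nth_append hd_conv_nth)
  qed
qed

lemma conc_edge:
  assumes "successively P (a @ [w 0])" "\<And>n. P (w n) (w (Suc n))"
  shows "P ((a \<frown> w) n) ((a \<frown> w) (Suc n))"
proof (cases "Suc n \<le> length a")
  case True
  then have "P ((a @ [w 0]) ! n) ((a @ [w 0]) ! Suc n)"
    using successively_nth[OF assms(1)] by simp
  then show ?thesis using True by (auto simp: nth_append conc_def)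
next
  case False
  then show ?thesis using assms(2)[of "n - length a"] by (simp add: conc_def Suc_diff_le)
qed

lemma infinite_play_lasso:
  assumes "successively (\<lambda>x y. (x, y) \<in> F) (a @ cyc @ [hd cyc])" "cyc \<noteq> []" "hd (a @ cyc) = s"
  shows "infinite_play F s (a \<frown> cyc\<^sup>\<omega>)"
proof -
  have "successively (\<lambda>x y. (x, y) \<in> F) (a @ [hd cyc])"
    and "successively (\<lambda>x y. (x, y) \<in> F) (cyc @ [hd cyc])"
    using assms(1,2) by (auto simp: successively_append_iff hd_append)
  moreover have "cyc\<^sup>\<omega> 0 = hd cyc" using assms(2) by (simp add: hd_conv_nth)
  ultimately have "(\<forall>n. ((a \<frown> cyc\<^sup>\<omega>) n, (a \<frown> cyc\<^sup>\<omega>) (Suc n)) \<in> F)"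
    using conc_edge[where P = "\<lambda>x y. (x, y) \<in> F"] iter_edge[OF assms(2)] by metis
  moreover have "(a \<frown> cyc\<^sup>\<omega>) 0 = s"
    using assms(2,3) by (cases a) (auto simp: hd_conv_nth)
  ultimately show ?thesis unfolding infinite_play_def by blast
qed

lemma successively_skip_cycle:
  assumes "successively P (a @ [v] @ b @ [v] @ e)"
  shows "successively P (a @ [v] @ e)"
proof -
  have "successively P (a @ [v])" "successively P (v # e)"
    using assms successively_append_iff[of P "a @ [v]" "b @ [v] @ e"]
      successively_append_iff[of P "a @ [v] @ b" "v # e"] by auto
  then show ?thesis by (auto simp: successively_append_iff successively_Cons)
qed

lemma finite_play_skip_cycle:
  assumes "finite_play F s (a @ [v] @ b @ [v] @ e)"
  shows "finite_play F s (a @ [v] @ e)"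
  using assms successively_skip_cycle[of _ a v b e] unfolding finite_play_def
  by (cases a; cases e) auto

lemma successively_snoc_Domain:
  "successively (\<lambda>x y. (x, y) \<in> F) (xs @ [v]) \<Longrightarrow> set xs \<subseteq> Domain F"
  by (induction xs) (auto simp: successively_Cons)

lemma successively_set_subset:
  "successively (\<lambda>x y. (x, y) \<in> F) xs \<Longrightarrow> xs \<noteq> [] \<Longrightarrow> hd xs \<in> W \<Longrightarrow> F \<subseteq> W \<times> W \<Longrightarrow> set xs \<subseteq> W"
  by (induction "\<lambda>x y. (x, y) \<in> F" xs rule: successively.induct) auto

lemma infinite_play_exists:
  assumes "\<nexists>xs. finite_play F s xs"
  shows "\<exists>\<pi>. infinite_play F s \<pi>"
proof -
  have "\<exists>xs. xs \<noteq> [] \<and> hd xs = s \<and> successively (\<lambda>x y. (x, y) \<in> F) xs \<and> last xs = x"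
    if "(s, x) \<in> F\<^sup>*" for x
    using that
  proof (induction rule: rtrancl_induct)
    case base
    show ?case by (intro exI[of _ "[s]"]) simp
  next
    case (step y z)
    then obtain xs where "xs \<noteq> []" "hd xs = s" "successively (\<lambda>x y. (x, y) \<in> F) xs" "last xs = y"
      by blast
    then show ?case using step.hyps(2)
      by (intro exI[of _ "xs @ [z]"]) (auto simp: successively_append_iff)
  qed
  then have reachable_live: "x \<in> Domain F" if "(s, x) \<in> F\<^sup>*" for x
    using that assms unfolding finite_play_def by blast
  define succ where "succ x = (SOME y. (x, y) \<in> F)" for x
  have edge: "(x, succ x) \<in> F" if "(s, x) \<in> F\<^sup>*" for x
    using reachable_live[OF that] unfolding succ_def by (auto intro: someI)
  define \<pi> where "\<pi> n = (succ ^^ n) s" for n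
  have "(s, \<pi> n) \<in> F\<^sup>*" for n
    by (induction n) (auto simp: \<pi>_def intro: rtrancl_into_rtrancl edge)
  then have "infinite_play F s \<pi>"
    unfolding infinite_play_def using edge by (simp add: \<pi>_def)
  then show ?thesis by blast
qed

section \<open>Maximal play profiles in finite graphs\<close>

context
  fixes W :: "'v option set" and F :: "('v option \<times> 'v option) set"
    and c :: "'v \<Rightarrow> nat" and d :: nat
  assumes finite_W: "finite W" and F_W: "F \<subseteq> W \<times> W" and None_dead_end: "None \<notin> Domain F"
    and colours_below: "\<And>v. Some v \<in> W \<Longrightarrow> c v < d"
begin

lemma finite_play_set: "finite_play F s xs \<Longrightarrow> s \<in> W \<Longrightarrow> set xs \<subseteq> W"
  using successively_set_subset F_W unfolding finite_play_def by metis

lemma play_profs_bounded: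
  assumes "s \<in> W" "p \<in> play_profs c F s"
  shows "prof_bounded d p"
  using assms(2) unfolding play_profs_alt
proof (elim UnE imageE CollectE)
  fix xs assume "p = path_prof c xs" "finite_play F s xs"
  then have "Some v \<in> set xs \<Longrightarrow> c v < d" for v
    using finite_play_set assms(1) colours_below by blast
  then have "i \<ge> d \<Longrightarrow> colour_count c xs i = 0" for i
    by (intro colour_count_eq_0) fastforce
  then show ?thesis using \<open>p = path_prof c xs\<close>
    by (simp add: prof_bounded_def path_prof_colour_count)
qed (auto simp: prof_bounded_def inf_prof_def)

lemma finite_distinct_plays:
  assumes "s \<in> W"
  shows "finite {xs. finite_play F s xs \<and> distinct xs}"
proof (rule finite_subset[OF _ finite_lists_length_le[OF finite_W, of "card W"]])
  have "set xs \<subseteq> W \<and> length xs \<le> card W" if "finite_play F s xs" "distinct xs" for xs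
    using finite_play_set[OF that(1) assms] card_mono[OF finite_W] distinct_card[OF that(2)]
    by metis
  then show "{xs. finite_play F s xs \<and> distinct xs} \<subseteq> {xs. set xs \<subseteq> W \<and> length xs \<le> card W}"
    by blast
qed

text \<open>If player 0 wins no infinite play, every cycle on a finite play is odd-dominated.\<close>
lemma finite_play_shorten:
  assumes "s \<in> W" "PInf \<notin> play_profs c F s" "finite_play F s xs" "\<not> distinct xs"
  shows "\<exists>ys. finite_play F s ys \<and> length ys < length xs \<and>
               prof_le d (path_prof c xs) (path_prof c ys)"
proof -
  obtain a v b e where xs: "xs = a @ [v] @ b @ [v] @ e"
    using not_distinct_decomp[OF assms(4)] by blast
  let ?P = "\<lambda>x y. (x, y) \<in> F" and ?cyc = "v # b"
  define M where "M = Max ((\<lambda>x. c (the x)) ` set ?cyc)"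
  have walk: "successively ?P xs" "hd xs = s"
    using assms(3) unfolding finite_play_def by auto
  have lasso: "successively ?P (a @ ?cyc @ [hd ?cyc])"
    using walk(1) successively_append_iff[of ?P "a @ ?cyc @ [v]" e] unfolding xs by simp
  have "successively ?P (?cyc @ [v])"
    using lasso successively_append_iff[of ?P a "?cyc @ [v]"] by simp
  then have cyc_live: "set ?cyc \<subseteq> Domain F"
    by (rule successively_snoc_Domain)
  have "odd M"
  proof
    assume "even M"
    then have "inf_prof c (a \<frown> ?cyc\<^sup>\<omega>) = PInf"
      by (simp add: inf_prof_lasso M_def)
    moreover have "infinite_play F s (a \<frown> ?cyc\<^sup>\<omega>)"
      using infinite_play_lasso[OF lasso] walk(2) xs by (cases a) auto
    ultimately show False using assms(2) unfolding play_profs_alt by force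
  qed
  moreover have "M < d"
  proof -
    have "M \<in> (\<lambda>x. c (the x)) ` set ?cyc" unfolding M_def by (intro Max_in) auto
    then obtain u where u: "u \<in> set ?cyc" "c (the u) = M" by blast
    have "u \<in> Domain F" "u \<in> W" using u(1) cyc_live finite_play_set[OF assms(3,1)] xs by auto
    moreover have "u \<noteq> None" using \<open>u \<in> Domain F\<close> None_dead_end by auto
    ultimately have "Some (the u) \<in> W" by simp
    then show ?thesis using colours_below u(2) by blast
  qed
  moreover have "None \<notin> set ?cyc" using cyc_live None_dead_end by auto
  ultimately have "prof_less d (path_prof c xs) (path_prof c (a @ [v] @ e))"
    using path_prof_less_remove_cycle[of ?cyc c d a "v # e"] unfolding M_def xs by simp
  moreover have "finite_play F s (a @ [v] @ e)"
    using finite_play_skip_cycle[of F s a v b e] assms(3) xs by simp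
  ultimately show ?thesis unfolding xs prof_le_def by fastforce
qed

lemma finite_play_dominated_by_distinct:
  assumes "s \<in> W" "PInf \<notin> play_profs c F s"
  shows "finite_play F s xs \<Longrightarrow>
           \<exists>ys. finite_play F s ys \<and> distinct ys \<and> prof_le d (path_prof c xs) (path_prof c ys)"
proof (induction "length xs" arbitrary: xs rule: less_induct)
  case less
  show ?case
  proof (cases "distinct xs")
    case True
    then show ?thesis using less.prems prof_le_refl by blast
  next
    case False
    then obtain ys where "finite_play F s ys" "length ys < length xs"
      "prof_le d (path_prof c xs) (path_prof c ys)"
      using finite_play_shorten[OF assms less.prems] by blast
    then show ?thesis using less.hyps prof_le_trans by blast
  qed
qed

lemma is_max_pmax_play_profs:
  assumes "s \<in> W"
  shows "is_max d (play_profs c F s) (pmax d (play_profs c F s))"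
proof -
  let ?S = "play_profs c F s"
  have "\<exists>m. is_max d ?S m"
  proof (cases "PInf \<in> ?S")
    case True
    then show ?thesis using prof_le_PInf unfolding is_max_def by blast
  next
    case no_win: False
    then have infinite_NInf: "inf_prof c \<pi> = NInf" if "infinite_play F s \<pi>" for \<pi>
      using that unfolding play_profs_alt inf_prof_def by (auto split: if_splits)
    show ?thesis
    proof (cases "\<exists>xs. finite_play F s xs")
      case True
      let ?D = "path_prof c ` {xs. finite_play F s xs \<and> distinct xs}"
      have D_S: "?D \<subseteq> ?S" unfolding play_profs_alt by blast
      have "?D \<noteq> {}"
        using True finite_play_dominated_by_distinct[OF assms no_win] by blast
      then have max_D: "is_max d ?D (pmax d ?D)"
        using finite_distinct_plays[OF assms] D_S play_profs_bounded[OF assms]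
        by (intro finite_is_max_pmax) auto
      then obtain ys where "pmax d ?D = path_prof c ys"
        unfolding is_max_def by blast
      moreover have "prof_le d (path_prof c xs) (pmax d ?D)" if "finite_play F s xs" for xs
        using finite_play_dominated_by_distinct[OF assms no_win that] max_D prof_le_trans
        unfolding is_max_def by blast
      ultimately have "prof_le d p (pmax d ?D)" if "p \<in> ?S" for p
        using that infinite_NInf NInf_prof_le unfolding play_profs_alt by auto
      then show ?thesis using max_D D_S unfolding is_max_def by blast
    next
      case False
      then obtain \<pi> where \<pi>: "infinite_play F s \<pi>" using infinite_play_exists by metis
      have "inf_prof c \<pi> \<in> ?S" unfolding play_profs_alt using \<pi> by blast
      then have "NInf \<in> ?S" using infinite_NInf[OF \<pi>] by simp
      moreover have "p = NInf" if "p \<in> ?S" for p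
        using that False infinite_NInf unfolding play_profs_alt by blast
      ultimately show ?thesis unfolding is_max_def using prof_le_refl by metis
    qed
  qed
  then show ?thesis using is_max_pmax by metis
qed

end

section \<open>Monotonicity of the valuation\<close>

lemma E0_subset_Ebot: "E0 E V0 \<subseteq> Ebot E V0"
  unfolding E0_def by blast

lemma E1_subset_Ebot: "E1 V E V0 \<subseteq> Ebot E V0"
  unfolding E1_def Ebot_def by blast

lemma Domain_Ebot: "V0 \<subseteq> V \<Longrightarrow> E \<subseteq> V \<times> V \<Longrightarrow> Domain (Ebot E V0) \<subseteq> Some ` V"
  unfolding Ebot_def by auto

lemma Domain_strategies:
  "strategy0 E V0 \<sigma> \<Longrightarrow> strategy1 V E V0 \<tau> \<Longrightarrow> Some ` V \<subseteq> Domain (\<sigma> \<union> \<tau>)"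
  unfolding strategy0_def strategy1_def by blast

lemma finite_strategies1:
  assumes "finite E"
  shows "finite {\<tau>. strategy1 V E V0 \<tau>}"
proof -
  have "E1 V E V0 \<subseteq> (\<lambda>(u, v). (Some u, Some v)) ` E" unfolding E1_def by auto
  then have "finite (E1 V E V0)" using assms finite_subset by blast
  then show ?thesis unfolding strategy1_def by (simp add: finite_Collect_subsets)
qed

lemma strategy1_E1: "\<forall>v\<in>V. \<exists>w. (v, w) \<in> E \<Longrightarrow> strategy1 V E V0 (E1 V E V0)"
  unfolding strategy1_def E1_def by blast

lemma arena_pmax_play_profs:
  assumes "arena V E V0 c d" "F \<subseteq> Ebot E V0" "s \<in> V"
  shows "is_max d (play_profs c F (Some s)) (pmax d (play_profs c F (Some s)))"
    and "prof_bounded d (pmax d (play_profs c F (Some s)))"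
proof -
  let ?W = "insert None (Some ` V)"
  have "Ebot E V0 \<subseteq> ?W \<times> ?W" "None \<notin> Domain (Ebot E V0)"
    using assms(1) unfolding arena_def Ebot_def by auto
  then have "F \<subseteq> ?W \<times> ?W" "None \<notin> Domain F"
    using assms(2) by blast+
  moreover have "finite ?W" "Some s \<in> ?W" "\<And>v. Some v \<in> ?W \<Longrightarrow> c v < d"
    using assms(1,3) unfolding arena_def by auto
  ultimately show "is_max d (play_profs c F (Some s)) (pmax d (play_profs c F (Some s)))"
    and "prof_bounded d (pmax d (play_profs c F (Some s)))"
    using is_max_pmax_play_profs play_profs_bounded unfolding is_max_def by metis+
qed

lemma val_Some:
  "val V E V0 c d \<sigma> (Some s) =
     pmin d ((\<lambda>\<tau>. pmax d (play_profs c (\<sigma> \<union> \<tau>) (Some s))) ` {\<tau>. strategy1 V E V0 \<tau>})"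
  unfolding val_def by (simp add: setcompr_eq_image)

theorem val_mono:
  assumes "arena V E V0 c d" "strategy0 E V0 \<sigma>" "\<sigma> \<subseteq> \<sigma>'" "\<sigma>' \<subseteq> E0 E V0" "s \<in> V"
  shows "prof_le d (val V E V0 c d \<sigma> (Some s)) (val V E V0 c d \<sigma>' (Some s))"
proof -
  have ar: "finite V" "E \<subseteq> V \<times> V" "\<forall>v\<in>V. \<exists>w. (v, w) \<in> E" "V0 \<subseteq> V"
    using assms(1) unfolding arena_def by auto
  let ?T = "{\<tau>. strategy1 V E V0 \<tau>}"
  let ?m = "\<lambda>\<sigma> \<tau>. pmax d (play_profs c (\<sigma> \<union> \<tau>) (Some s))"
  have "prof_le d (?m \<sigma> \<tau>) (?m \<sigma>' \<tau>) \<and> prof_bounded d (?m \<sigma> \<tau>) \<and> prof_bounded d (?m \<sigma>' \<tau>)"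
    if \<tau>: "\<tau> \<in> ?T" for \<tau>
  proof -
    have "\<tau> \<subseteq> Ebot E V0" using \<tau> E1_subset_Ebot unfolding strategy1_def by blast
    then have sub: "\<sigma> \<union> \<tau> \<subseteq> Ebot E V0" "\<sigma>' \<union> \<tau> \<subseteq> Ebot E V0"
      using assms(3,4) E0_subset_Ebot by blast+
    have "Domain (\<sigma>' \<union> \<tau>) \<subseteq> Domain (\<sigma> \<union> \<tau>)"
      using Domain_mono[OF sub(2)] Domain_Ebot[OF ar(4,2)] Domain_strategies[OF assms(2)] \<tau> by blast
    then have "play_profs c (\<sigma> \<union> \<tau>) (Some s) \<subseteq> play_profs c (\<sigma>' \<union> \<tau>) (Some s)"
      using assms(3) by (intro play_profs_mono) blast+
    then show ?thesis
      using arena_pmax_play_profs[OF assms(1) sub(1) assms(5)] arena_pmax_play_profs[OF assms(1) sub(2) assms(5)]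
      by (simp add: pmax_mono)
  qed
  moreover have "finite ?T"
    using finite_subset[OF ar(2)] ar(1) by (simp add: finite_strategies1)
  moreover have "?T \<noteq> {}" using strategy1_E1[OF ar(3)] by blast
  ultimately show ?thesis unfolding val_Some by (intro pmin_image_mono) blast+
qed

theorem mainTheorem2:
  fixes V :: "'v set" and E :: "('v \<times> 'v) set" and V0 :: "'v set"
    and c :: "'v \<Rightarrow> nat" and d :: nat
    and \<sigma> \<sigma>' :: "('v option \<times> 'v option) set"
  assumes "arena V E V0 c d"
    and "strategy0 E V0 \<sigma>" and "reasonable V E V0 c \<sigma>"
    and "strategy0 E V0 \<sigma>'" and "\<sigma>' \<subseteq> improvements V E V0 c d \<sigma>"
  shows "\<forall>s\<in>V. prof_le d (val V E V0 c d \<sigma>' (Some s))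
                       (val V E V0 c d (improvements V E V0 c d \<sigma>) (Some s))"
proof
  have "improvements V E V0 c d \<sigma> \<subseteq> E0 E V0"
    unfolding improvements_def by blast
  then show "prof_le d (val V E V0 c d \<sigma>' (Some s))
               (val V E V0 c d (improvements V E V0 c d \<sigma>) (Some s))" if "s \<in> V" for s
    using val_mono[OF assms(1,4,5)] that by blast
qed

end
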